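(* Suppose $w$ induces the triangulation $Z$ and fix $\epsilon>0$. There are constants $C,a>0$ (depending on $w,\Delta,\epsilon$) such that for all sufficiently small $\delta>0$: if $S\in Z$ and $x\in P_\Sigma$ satisfy $\rho_m(x)>\epsilon$ for all $m\in S$, then $\rho_m(x)\le C\delta^a$ for every $m\in A\setminus S$ such that $S\cup\{m\}$ is not (the vertex set of) a simplex of $Z$.
   Context: Let $M\cong\mathbb{Z}^2$, $\Delta\subset M_{\mathbb{R}}$ a 2-dimensional lattice polygon, $A=\Delta\cap M$, $P_\Sigma$ the projective toric surface of the normal fan of $\Delta$ with torus $(\mathbb{C}^* )^2$, $s_m(x)=x^m$ for $m\in A$. For $w\in\mathbb{Z}^A$, $\delta\in(0,1)$: $\rho_m=\delta^{2w_m}|s_m|^2/\sum_{m'\in A}\delta^{2w_{m'}}|s_{m'}|^2$ (extended continuously to $P_\Sigma$). We say $w$ induces the triangulation $Z$ if $Z$ is a triangulation of $\Delta$ whose vertex set is all of $A$, each triangle containing no lattice points other than its vertices, such that for every simplex $\sigma$ of $Z$ there is an affine $\ell_\sigma$ with $w_m=\ell_\sigma(m)$ for vertices $m$ of $\sigma$ and $w_m>\ell_\sigma(m)$ for all other $m\in A$. Simplices of $Z$ are identified with their vertex sets $S\subset A$. *)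

theory Defs
  imports "HOL-Analysis.Analysis"
begin

definition emb :: "int \<times> int \<Rightarrow> real \<times> real" where
  "emb m = (real_of_int (fst m), real_of_int (snd m))"

definition is_lattice_polygon :: "(real \<times> real) set \<Rightarrow> bool" where
  "is_lattice_polygon \<Delta> \<longleftrightarrow>
     (\<exists>V. finite V \<and> \<Delta> = convex hull (emb ` V)) \<and> interior \<Delta> \<noteq> {}"

definition lattice_pts :: "(real \<times> real) set \<Rightarrow> (int \<times> int) set" where
  "lattice_pts \<Delta> = {m. emb m \<in> \<Delta>}"

text \<open>Z is a triangulation of Delta (as an abstract simplicial complex of vertex sets),
  whose vertex set is all of A, and each triangle contains no lattice points besides its vertices.\<close>
definition is_triangulation :: "(real \<times> real) set \<Rightarrow> (int \<times> int) set set \<Rightarrow> bool" where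
  "is_triangulation \<Delta> Z \<longleftrightarrow>
     Z \<subseteq> Pow (lattice_pts \<Delta>) \<and>
     (\<forall>S\<in>Z. S \<noteq> {} \<and> (\<exists>T\<in>Z. S \<subseteq> T \<and> card T = 3 \<and> \<not> collinear (emb ` T))) \<and>
     (\<forall>T\<in>Z. \<forall>S. S \<noteq> {} \<and> S \<subseteq> T \<longrightarrow> S \<in> Z) \<and>
     (\<forall>m\<in>lattice_pts \<Delta>. {m} \<in> Z) \<and>
     \<Union>{convex hull (emb ` T) | T. T \<in> Z} = \<Delta> \<and>
     (\<forall>S\<in>Z. \<forall>T\<in>Z. convex hull (emb ` S) \<inter> convex hull (emb ` T) = convex hull (emb ` (S \<inter> T))) \<and>
     (\<forall>T\<in>Z. card T = 3 \<longrightarrow> {m. emb m \<in> convex hull (emb ` T)} = T)"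

definition induces :: "(int \<times> int \<Rightarrow> int) \<Rightarrow> (real \<times> real) set \<Rightarrow> (int \<times> int) set set \<Rightarrow> bool" where
  "induces w \<Delta> Z \<longleftrightarrow> is_triangulation \<Delta> Z \<and>
     (\<forall>S\<in>Z. \<exists>c a1 a2 :: real.
        (\<forall>m\<in>S. real_of_int (w m) = c + a1 * real_of_int (fst m) + a2 * real_of_int (snd m)) \<and>
        (\<forall>m\<in>lattice_pts \<Delta> - S. real_of_int (w m) > c + a1 * real_of_int (fst m) + a2 * real_of_int (snd m)))"

text \<open>P_Sigma, realised via its projective embedding by the sections s_m, m in A, as the set of
  homogeneous coordinate vectors (nonzero, supported on A) in the closure of the affine cone over
  the image of the torus.  rho is scale invariant, so it is well defined on these points and is
  the continuous extension of rho from the torus.\<close>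
definition torus_cone :: "(real \<times> real) set \<Rightarrow> (int \<times> int \<Rightarrow> complex) set" where
  "torus_cone \<Delta> = {(\<lambda>m. if m \<in> lattice_pts \<Delta> then t * (fst x) powi (fst m) * (snd x) powi (snd m) else 0)
                     | t x. t \<noteq> 0 \<and> fst x \<noteq> 0 \<and> snd x \<noteq> 0}"

definition PSigma :: "(real \<times> real) set \<Rightarrow> (int \<times> int \<Rightarrow> complex) set" where
  "PSigma \<Delta> = {z. z \<in> closure (torus_cone \<Delta>) \<and> (\<exists>m\<in>lattice_pts \<Delta>. z m \<noteq> 0)}"

definition rho :: "(int \<times> int \<Rightarrow> int) \<Rightarrow> (real \<times> real) set \<Rightarrow> real \<Rightarrow> (int \<times> int \<Rightarrow> complex) \<Rightarrow> int \<times> int \<Rightarrow> real" where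
  "rho w \<Delta> \<delta> z m = \<delta> powr (2 * real_of_int (w m)) * (cmod (z m))\<^sup>2 /
      (\<Sum>m'\<in>lattice_pts \<Delta>. \<delta> powr (2 * real_of_int (w m')) * (cmod (z m'))\<^sup>2)"

end

theory Submission
  imports Defs
begin

(* On the torus, ln (\<delta>^(2 w_n) |s_n(x)|^2) = \<psi>(n) + 2 w_n ln \<delta> with \<psi> affine in n.
   Let T be a simplex of Z whose hull contains the barycenter of X = S \<union> {m}, and write
   w = \<ell>_T + d_T, where d_T vanishes on T and is at least some uniform margin e > 0 on A - T.
   The affine function \<psi> + 2 ln \<delta> \<ell>_T has the same mean over X as at the barycenter, where it
   is at most its maximum over T, i.e. at most ln D with D the sum of all weights.  Since X is
   not a simplex, some vertex of X lies off T and costs a factor \<delta>^(2e); together with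
   \<rho>_s > \<epsilon> on S this gives \<rho>_m \<le> \<epsilon>^(-|S|) \<delta>^(2e).  The bound is a closed condition under
   open hypotheses, so it passes from the torus to its closure P_\<Sigma>. *)

definition weighted_norm_sq ::
    "(int \<times> int \<Rightarrow> int) \<Rightarrow> real \<Rightarrow> (int \<times> int \<Rightarrow> complex) \<Rightarrow> int \<times> int \<Rightarrow> real"
  where "weighted_norm_sq w \<delta> z m = \<delta> powr (2 * real_of_int (w m)) * (cmod (z m))\<^sup>2"

lemma rho_eq_weighted_norm_sq:
  "rho w \<Delta> \<delta> z m = weighted_norm_sq w \<delta> z m / (\<Sum>n\<in>lattice_pts \<Delta>. weighted_norm_sq w \<delta> z n)"
  by (simp add: rho_def weighted_norm_sq_def)

lemma weighted_norm_sq_nonneg: "weighted_norm_sq w \<delta> z m \<ge> 0"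
  by (simp add: weighted_norm_sq_def)

lemma weighted_norm_sq_le_sum:
  "finite A \<Longrightarrow> m \<in> A \<Longrightarrow> weighted_norm_sq w \<delta> z m \<le> (\<Sum>n\<in>A. weighted_norm_sq w \<delta> z n)"
  by (rule member_le_sum) (auto simp: weighted_norm_sq_nonneg)

lemma continuous_on_weighted_norm_sq: "continuous_on UNIV (\<lambda>z. weighted_norm_sq w \<delta> z m)"
  unfolding weighted_norm_sq_def
  by (intro continuous_intros continuous_on_compose2[OF continuous_on_product_coordinates]) auto

lemma finite_lattice_pts:
  assumes "bounded \<Delta>"
  shows "finite (lattice_pts \<Delta>)"
proof -
  obtain r where r: "\<And>x. x \<in> \<Delta> \<Longrightarrow> norm x \<le> r"
    using assms bounded_iff by blast
  define R where "R = \<lceil>r\<rceil>"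
  have "lattice_pts \<Delta> \<subseteq> {-R..R} \<times> {-R..R}"
  proof
    fix m assume "m \<in> lattice_pts \<Delta>"
    then have "norm (emb m) \<le> r"
      using r by (simp add: lattice_pts_def)
    then have "\<bar>real_of_int (fst m)\<bar> \<le> r" "\<bar>real_of_int (snd m)\<bar> \<le> r"
      using norm_fst_le[of "real_of_int (fst m)" "real_of_int (snd m)"]
        norm_snd_le[of "real_of_int (snd m)" "real_of_int (fst m)"]
      by (auto simp: emb_def)
    then show "m \<in> {-R..R} \<times> {-R..R}"
      unfolding R_def by (cases m) (auto simp: abs_le_iff minus_le_iff le_ceiling_iff)
  qed
  then show ?thesis
    by (rule finite_subset) simp
qed

lemma lattice_polygon_bounded_convex:
  assumes "is_lattice_polygon \<Delta>"
  shows "bounded \<Delta>" "convex \<Delta>"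
  using assms
  by (auto simp: is_lattice_polygon_def
      intro: compact_imp_bounded compact_convex_hull finite_imp_compact)

definition barycenter :: "'i set \<Rightarrow> ('i \<Rightarrow> 'a::real_vector) \<Rightarrow> 'a"
  where "barycenter I q = (\<Sum>i\<in>I. q i) /\<^sub>R real (card I)"

lemma convex_on_affine:
  fixes l :: "'a::real_vector \<Rightarrow> real"
  assumes "linear l" "convex S"
  shows "convex_on S (\<lambda>x. k + l x)"
  by (rule convex_onI) (simp_all add: assms linear_add linear_diff linear_scale algebra_simps)

lemma sum_affine_le_of_barycenter_in_convex_hull:
  fixes l :: "'a::real_vector \<Rightarrow> real"
  assumes l: "linear l" and I: "finite I" "I \<noteq> {}"
    and bary: "barycenter I q \<in> convex hull P" and le: "\<And>y. y \<in> P \<Longrightarrow> k + l y \<le> c"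
  shows "(\<Sum>i\<in>I. k + l (q i)) \<le> real (card I) * c"
proof -
  have "k + l (barycenter I q) \<le> c"
    using convex_on_convex_hull_bound[OF convex_on_affine[OF l convex_convex_hull]] bary le
    by blast
  moreover have "(\<Sum>i\<in>I. k + l (q i)) = real (card I) * (k + l (barycenter I q))"
    using I
    by (simp add: barycenter_def sum.distrib linear_sum[OF l] linear_scale[OF l] algebra_simps)
  ultimately show ?thesis
    by (simp add: mult_left_mono)
qed

lemma affine_log_weight_bound:
  fixes Y d :: "'i \<Rightarrow> real" and q :: "'i \<Rightarrow> 'a::real_vector" and l :: "'a \<Rightarrow> real"
  assumes l: "linear l" and X: "finite X" "m \<in> X"
    and bary: "barycenter X q \<in> convex hull (q ` T)"
    and le_T: "\<And>t. t \<in> T \<Longrightarrow> k + l (q t) \<le> c"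
    and Y: "\<And>x. x \<in> X \<Longrightarrow> Y x = k + l (q x) - d x"
    and d_nonneg: "\<And>x. x \<in> X \<Longrightarrow> d x \<ge> 0"
    and x0: "x0 \<in> X" "d x0 \<ge> e"
    and ge: "\<And>x. x \<in> X - {m} \<Longrightarrow> Y x \<ge> c + b"
  shows "Y m \<le> c - real (card X - 1) * b - e"
proof -
  have "(\<Sum>x\<in>X. Y x + d x) = (\<Sum>x\<in>X. k + l (q x))"
    using Y by simp
  also have "\<dots> \<le> real (card X) * c"
    using sum_affine_le_of_barycenter_in_convex_hull[OF l X(1) _ bary] le_T X(2) by blast
  finally have sum_le: "(\<Sum>x\<in>X. Y x) + (\<Sum>x\<in>X. d x) \<le> real (card X) * c"
    by (simp add: sum.distrib)
  have "d x0 \<le> (\<Sum>x\<in>X. d x)"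
    by (rule member_le_sum) (use x0 d_nonneg X in auto)
  then have "e \<le> (\<Sum>x\<in>X. d x)"
    using x0(2) by linarith
  moreover have "real (card X - 1) * (c + b) \<le> (\<Sum>x\<in>X - {m}. Y x)"
    using sum_mono[of "X - {m}" "\<lambda>_. c + b" Y] ge X by simp
  moreover have "(\<Sum>x\<in>X. Y x) = Y m + (\<Sum>x\<in>X - {m}. Y x)"
    using X by (simp add: sum.remove)
  moreover have "card X \<ge> 1"
    using X by (metis One_nat_def Suc_leI card_gt_0_iff empty_iff)
  ultimately show ?thesis
    using sum_le by (simp add: of_nat_diff algebra_simps)
qed

lemma triangulation_subset_Pow: "is_triangulation \<Delta> Z \<Longrightarrow> Z \<subseteq> Pow (lattice_pts \<Delta>)"
  unfolding is_triangulation_def by (elim conjE)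

lemma triangulation_simplex_nonempty: "is_triangulation \<Delta> Z \<Longrightarrow> S \<in> Z \<Longrightarrow> S \<noteq> {}"
  unfolding is_triangulation_def by (elim conjE) blast

lemma triangulation_face:
  assumes "is_triangulation \<Delta> Z" "T \<in> Z" "S \<noteq> {}" "S \<subseteq> T"
  shows "S \<in> Z"
proof -
  have "\<forall>T\<in>Z. \<forall>S. S \<noteq> {} \<and> S \<subseteq> T \<longrightarrow> S \<in> Z"
    using assms(1) unfolding is_triangulation_def by (elim conjE)
  then show ?thesis
    using assms(2-4) by blast
qed

lemma triangulation_covers:
  "is_triangulation \<Delta> Z \<Longrightarrow> \<Union>{convex hull (emb ` T) | T. T \<in> Z} = \<Delta>"
  unfolding is_triangulation_def by (elim conjE)

lemma finite_triangulation:
  assumes "is_triangulation \<Delta> Z" "finite (lattice_pts \<Delta>)"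
  shows "finite Z"
  using triangulation_subset_Pow[OF assms(1)] assms(2) by (simp add: finite_subset)

lemma triangulation_covers_barycenter:
  assumes "is_triangulation \<Delta> Z" "convex \<Delta>" "X \<subseteq> lattice_pts \<Delta>" "finite X" "X \<noteq> {}"
  obtains T where "T \<in> Z" "barycenter X emb \<in> convex hull (emb ` T)"
proof -
  have "(\<Sum>x\<in>X. inverse (real (card X)) *\<^sub>R emb x) \<in> \<Delta>"
    by (rule convex_sum[OF assms(4,2)]) (use assms in \<open>auto simp: lattice_pts_def\<close>)
  then have "barycenter X emb \<in> \<Delta>"
    by (simp add: barycenter_def scaleR_sum_right)
  then show ?thesis
    using that triangulation_covers[OF assms(1)] by blast
qed

definition supported_with_margin ::
    "(int \<times> int \<Rightarrow> int) \<Rightarrow> (int \<times> int) set \<Rightarrow> (int \<times> int) set \<Rightarrow> real \<Rightarrow> bool"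
  where "supported_with_margin w A T e \<longleftrightarrow> (\<exists>c a1 a2 :: real.
     (\<forall>m\<in>T. real_of_int (w m) = c + a1 * real_of_int (fst m) + a2 * real_of_int (snd m)) \<and>
     (\<forall>m\<in>A - T. real_of_int (w m) \<ge> c + a1 * real_of_int (fst m) + a2 * real_of_int (snd m) + e))"

lemma induces_triangulation: "induces w \<Delta> Z \<Longrightarrow> is_triangulation \<Delta> Z"
  unfolding induces_def by (elim conjE)

lemma induces_supported_with_margin:
  assumes w: "induces w \<Delta> Z" and A: "finite (lattice_pts \<Delta>)"
  obtains e where "e > 0" "\<And>T. T \<in> Z \<Longrightarrow> supported_with_margin w (lattice_pts \<Delta>) T e"
proof -
  have "\<forall>\<^sub>F e in at_right 0. supported_with_margin w (lattice_pts \<Delta>) T e" if "T \<in> Z" for T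
  proof -
    have "\<exists>c a1 a2 :: real.
        (\<forall>m\<in>T. real_of_int (w m) = c + a1 * real_of_int (fst m) + a2 * real_of_int (snd m)) \<and>
        (\<forall>m\<in>lattice_pts \<Delta> - T.
           real_of_int (w m) > c + a1 * real_of_int (fst m) + a2 * real_of_int (snd m))"
      using w that unfolding induces_def by blast
    then obtain c a1 a2 :: real
      where eq: "\<forall>m\<in>T. real_of_int (w m) = c + a1 * real_of_int (fst m) + a2 * real_of_int (snd m)"
        and gt: "\<forall>m\<in>lattice_pts \<Delta> - T.
                   real_of_int (w m) > c + a1 * real_of_int (fst m) + a2 * real_of_int (snd m)"
      by blast
    have "\<forall>\<^sub>F e in at_right 0. \<forall>m\<in>lattice_pts \<Delta> - T.
        e < real_of_int (w m) - (c + a1 * real_of_int (fst m) + a2 * real_of_int (snd m))"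
      using A gt by (intro eventually_ball_finite ballI order_tendstoD(2)[OF tendsto_ident_at]) auto
    then show ?thesis
      unfolding supported_with_margin_def by eventually_elim (use eq in \<open>force\<close>)
  qed
  then have "\<forall>\<^sub>F e in at_right 0. e > 0 \<and> (\<forall>T\<in>Z. supported_with_margin w (lattice_pts \<Delta>) T e)"
    using finite_triangulation[OF induces_triangulation[OF w] A]
    by (intro eventually_conj eventually_at_right_less eventually_ball_finite) auto
  then show ?thesis
    using that eventually_happens'[OF trivial_limit_at_right_real] by blast
qed

lemma powi_eq_exp_ln: "(r::real) > 0 \<Longrightarrow> r powi k = exp (real_of_int k * ln r)"
  using powr_real_of_int'[of r k] by (simp add: powr_def)

lemma weighted_norm_sq_torus_cone:
  assumes "z \<in> torus_cone \<Delta>" "\<delta> > 0"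
  obtains k b1 b2 where "\<And>n. n \<in> lattice_pts \<Delta> \<Longrightarrow> weighted_norm_sq w \<delta> z n =
      exp (k + b1 * real_of_int (fst n) + b2 * real_of_int (snd n) + 2 * ln \<delta> * real_of_int (w n))"
proof -
  from assms(1) obtain t x where tx: "t \<noteq> 0" "fst x \<noteq> 0" "snd x \<noteq> 0"
    and z: "z = (\<lambda>m. if m \<in> lattice_pts \<Delta> then t * fst x powi fst m * snd x powi snd m else 0)"
    by (auto simp: torus_cone_def)
  define k where "k = 2 * ln (cmod t)"
  define b1 where "b1 = 2 * ln (cmod (fst x))"
  define b2 where "b2 = 2 * ln (cmod (snd x))"
  have "weighted_norm_sq w \<delta> z n =
      exp (k + b1 * real_of_int (fst n) + b2 * real_of_int (snd n) + 2 * ln \<delta> * real_of_int (w n))"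
    if "n \<in> lattice_pts \<Delta>" for n
  proof -
    have "cmod (z n) = cmod t * cmod (fst x) powi fst n * cmod (snd x) powi snd n"
      using that by (simp add: z norm_mult norm_power_int)
    also have "\<dots> = exp ((k + b1 * real_of_int (fst n) + b2 * real_of_int (snd n)) / 2)"
      using tx
      by (simp add: powi_eq_exp_ln k_def b1_def b2_def exp_add add_divide_distrib mult.commute)
    finally have "(cmod (z n))\<^sup>2 = exp (k + b1 * real_of_int (fst n) + b2 * real_of_int (snd n))"
      by (simp add: power2_eq_square exp_add[symmetric])
    moreover have "\<delta> powr (2 * real_of_int (w n)) = exp (2 * ln \<delta> * real_of_int (w n))"
      using assms(2) by (simp add: powr_def mult_ac)
    ultimately show ?thesis
      by (simp add: weighted_norm_sq_def exp_add[symmetric] add_ac)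
  qed
  then show ?thesis
    using that by blast
qed

lemma weighted_norm_sq_torus_cone_pos:
  assumes "z \<in> torus_cone \<Delta>" "\<delta> > 0" "n \<in> lattice_pts \<Delta>"
  shows "weighted_norm_sq w \<delta> z n > 0"
  using weighted_norm_sq_torus_cone[OF assms(1,2)] assms(3) by (metis exp_gt_zero)

lemma torus_cone_log_estimate:
  assumes A: "finite (lattice_pts \<Delta>)" and \<delta>: "0 < \<delta>" "\<delta> < 1" and \<epsilon>: "\<epsilon> > 0"
    and z: "z \<in> torus_cone \<Delta>"
    and X: "X \<subseteq> lattice_pts \<Delta>" "finite X" "m \<in> X"
    and T: "T \<subseteq> lattice_pts \<Delta>" "barycenter X emb \<in> convex hull (emb ` T)"
    and on_T: "\<forall>n\<in>T. real_of_int (w n) = c + a1 * real_of_int (fst n) + a2 * real_of_int (snd n)"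
    and off_T: "\<forall>n\<in>lattice_pts \<Delta> - T.
                  real_of_int (w n) \<ge> c + a1 * real_of_int (fst n) + a2 * real_of_int (snd n) + e"
    and e: "e \<ge> 0" and x0: "x0 \<in> X - T"
  defines "D \<equiv> \<Sum>n\<in>lattice_pts \<Delta>. weighted_norm_sq w \<delta> z n"
  assumes large: "\<And>x. x \<in> X - {m} \<Longrightarrow> \<epsilon> * D \<le> weighted_norm_sq w \<delta> z x"
  shows "ln (weighted_norm_sq w \<delta> z m) \<le> ln D - real (card X - 1) * ln \<epsilon> + 2 * e * ln \<delta>"
proof -
  define N where "N = weighted_norm_sq w \<delta> z"
  obtain k b1 b2 where N: "\<And>n. n \<in> lattice_pts \<Delta> \<Longrightarrow> N n =
      exp (k + b1 * real_of_int (fst n) + b2 * real_of_int (snd n) + 2 * ln \<delta> * real_of_int (w n))"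
    using weighted_norm_sq_torus_cone[OF z \<delta>(1)] unfolding N_def by blast
  \<comment> \<open>Subtracting \<ell>_T splits ln N into an affine part and a penalty d vanishing on T.\<close>
  define d where "d n = - 2 * ln \<delta> *
      (real_of_int (w n) - (c + a1 * real_of_int (fst n) + a2 * real_of_int (snd n)))" for n
  define l where "l p = (b1 + 2 * ln \<delta> * a1) * fst p + (b2 + 2 * ln \<delta> * a2) * snd p"
    for p :: "real \<times> real"
  have "linear l"
    by (rule linearI) (simp_all add: l_def algebra_simps)
  have ln\<delta>: "- 2 * ln \<delta> > 0"
    using \<delta> by simp
  have N_le_D: "N n \<le> D" if "n \<in> lattice_pts \<Delta>" for n
    unfolding D_def N_def using A that by (rule weighted_norm_sq_le_sum)
  have D_pos: "D > 0"
    using weighted_norm_sq_torus_cone_pos[OF z \<delta>(1)] N_le_D X(1,3) unfolding N_def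
    by (meson less_le_trans subsetD)
  have "ln (N m) \<le> ln D - real (card X - 1) * ln \<epsilon> - (- 2 * ln \<delta> * e)"
  proof (rule affine_log_weight_bound[OF \<open>linear l\<close> X(2,3) T(2)])
    show "ln (N x) = k + 2 * ln \<delta> * c + l (emb x) - d x" if "x \<in> X" for x
      using N[of x] X(1) that by (auto simp: l_def d_def emb_def algebra_simps)
    show "k + 2 * ln \<delta> * c + l (emb t) \<le> ln D" if "t \<in> T" for t
    proof -
      have "k + 2 * ln \<delta> * c + l (emb t) = ln (N t)"
        using N[of t] on_T T(1) that by (auto simp: l_def emb_def algebra_simps)
      also have "\<dots> \<le> ln D"
        using that T(1) weighted_norm_sq_torus_cone_pos[OF z \<delta>(1), of t w]
        by (intro ln_mono N_le_D) (auto simp: N_def)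
      finally show ?thesis .
    qed
    show "d x \<ge> 0" if "x \<in> X" for x
    proof -
      have "0 \<le> real_of_int (w x) - (c + a1 * real_of_int (fst x) + a2 * real_of_int (snd x))"
        using that X(1) on_T off_T e by (cases "x \<in> T") force+
      then show ?thesis
        unfolding d_def by (rule mult_nonneg_nonneg[OF less_imp_le[OF ln\<delta>]])
    qed
    show "d x0 \<ge> - 2 * ln \<delta> * e"
    proof -
      have "e \<le> real_of_int (w x0) - (c + a1 * real_of_int (fst x0) + a2 * real_of_int (snd x0))"
        using x0 X(1) off_T by force
      then show ?thesis
        unfolding d_def by (rule mult_left_mono[OF _ less_imp_le[OF ln\<delta>]])
    qed
    show "ln (N x) \<ge> ln D + ln \<epsilon>" if "x \<in> X - {m}" for x
    proof -
      have "ln (\<epsilon> * D) \<le> ln (N x)"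
        using large[OF that] \<epsilon> D_pos by (intro ln_mono) (auto simp: N_def)
      then show ?thesis
        using \<epsilon> D_pos by (simp add: ln_mult)
    qed
  qed (use x0 in simp)
  then show ?thesis
    by (simp add: N_def algebra_simps)
qed

lemma torus_cone_estimate:
  assumes tri: "is_triangulation \<Delta> Z" and cvx: "convex \<Delta>" and A: "finite (lattice_pts \<Delta>)"
    and margin: "\<And>T. T \<in> Z \<Longrightarrow> supported_with_margin w (lattice_pts \<Delta>) T e" "e \<ge> 0"
    and \<delta>: "0 < \<delta>" "\<delta> < 1" and \<epsilon>: "\<epsilon> > 0"
    and z: "z \<in> torus_cone \<Delta>"
    and S: "S \<in> Z" and m: "m \<in> lattice_pts \<Delta> - S" "insert m S \<notin> Z"
  defines "D \<equiv> \<Sum>n\<in>lattice_pts \<Delta>. weighted_norm_sq w \<delta> z n"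
  assumes large: "\<And>s. s \<in> S \<Longrightarrow> \<epsilon> * D \<le> weighted_norm_sq w \<delta> z s"
  shows "weighted_norm_sq w \<delta> z m \<le> (1 / \<epsilon>) ^ card S * \<delta> powr (2 * e) * D"
proof -
  have D_pos: "D > 0"
    using weighted_norm_sq_torus_cone_pos[OF z \<delta>(1), of m w]
      weighted_norm_sq_le_sum[OF A, of m w \<delta> z] m(1)
    unfolding D_def by simp
  define X where "X = insert m S"
  have SA: "S \<subseteq> lattice_pts \<Delta>"
    using triangulation_subset_Pow[OF tri] S by blast
  then have X: "X \<subseteq> lattice_pts \<Delta>" "finite X" "m \<in> X" and card_X: "card X - 1 = card S"
    using m A by (auto simp: X_def finite_subset)
  obtain T where T: "T \<in> Z" "barycenter X emb \<in> convex hull (emb ` T)"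
    using triangulation_covers_barycenter[OF tri cvx X(1,2)] X(3) by blast
  have "\<not> X \<subseteq> T"
    using triangulation_face[OF tri T(1)] m(2) by (auto simp: X_def)
  then obtain x0 where x0: "x0 \<in> X - T"
    by blast
  obtain c a1 a2 where
      on_T: "\<forall>n\<in>T. real_of_int (w n) = c + a1 * real_of_int (fst n) + a2 * real_of_int (snd n)"
    and off_T: "\<forall>n\<in>lattice_pts \<Delta> - T.
         real_of_int (w n) \<ge> c + a1 * real_of_int (fst n) + a2 * real_of_int (snd n) + e"
    using margin(1)[OF T(1)] unfolding supported_with_margin_def by blast
  have "T \<subseteq> lattice_pts \<Delta>"
    using triangulation_subset_Pow[OF tri] T(1) by blast
  then have "ln (weighted_norm_sq w \<delta> z m) \<le> ln D - real (card X - 1) * ln \<epsilon> + 2 * e * ln \<delta>"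
    unfolding D_def
    by (rule torus_cone_log_estimate[OF A \<delta> \<epsilon> z X _ T(2) on_T off_T margin(2) x0])
      (use large in \<open>auto simp: X_def D_def\<close>)
  then have "weighted_norm_sq w \<delta> z m \<le> exp (ln D - real (card S) * ln \<epsilon> + 2 * e * ln \<delta>)"
    using weighted_norm_sq_torus_cone_pos[OF z \<delta>(1)] m(1) card_X
    by (metis DiffD1 exp_le_cancel_iff exp_ln)
  also have "\<dots> = (1 / \<epsilon>) ^ card S * \<delta> powr (2 * e) * D"
    using D_pos \<epsilon> \<delta>(1)
    by (simp add: exp_add exp_diff exp_of_nat_mult exp_of_nat2_mult powr_def power_one_over
        field_simps)
  finally show ?thesis .
qed

lemma closure_preserves_le_under_strict_hyps:
  fixes f :: "'i \<Rightarrow> 'a::topological_space \<Rightarrow> real" and g :: "'a \<Rightarrow> real"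
  assumes "finite I" "\<And>i. continuous_on UNIV (f i)" "continuous_on UNIV g"
    and le: "\<And>x. x \<in> X \<Longrightarrow> \<forall>i\<in>I. 0 < f i x \<Longrightarrow> g x \<le> 0"
    and z: "z \<in> closure X" "\<forall>i\<in>I. 0 < f i z"
  shows "g z \<le> 0"
proof (rule ccontr)
  assume "\<not> g z \<le> 0"
  define U where "U = (\<Inter>i\<in>I. {x. 0 < f i x}) \<inter> {x. 0 < g x}"
  have "open U"
    unfolding U_def using assms(1-3)
    by (intro open_Int open_INT ballI open_Collect_less continuous_on_const) auto
  moreover have "z \<in> U"
    using z(2) \<open>\<not> g z \<le> 0\<close> by (simp add: U_def)
  ultimately obtain x where "x \<in> X" "x \<in> U"
    using z(1) open_Int_closure_eq_empty by blast
  then show False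
    using le by (force simp: U_def)
qed

lemma PSigma_estimate:
  assumes tri: "is_triangulation \<Delta> Z" and cvx: "convex \<Delta>" and A: "finite (lattice_pts \<Delta>)"
    and margin: "\<And>T. T \<in> Z \<Longrightarrow> supported_with_margin w (lattice_pts \<Delta>) T e" "e \<ge> 0"
    and \<delta>: "0 < \<delta>" "\<delta> < 1" and \<epsilon>: "\<epsilon> > 0"
    and S: "S \<in> Z" and m: "m \<in> lattice_pts \<Delta> - S" "insert m S \<notin> Z"
    and z: "z \<in> PSigma \<Delta>" and large: "\<forall>s\<in>S. rho w \<Delta> \<delta> z s > \<epsilon>"
  shows "rho w \<Delta> \<delta> z m \<le> (1 / \<epsilon>) ^ card S * \<delta> powr (2 * e)"
proof -
  define B where "B = (1 / \<epsilon>) ^ card S * \<delta> powr (2 * e)"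
  define D where "D z = (\<Sum>n\<in>lattice_pts \<Delta>. weighted_norm_sq w \<delta> z n)" for z
  have "finite S"
    using triangulation_subset_Pow[OF tri] S A by (auto intro: finite_subset)
  have continuous_on_D: "continuous_on UNIV D"
    unfolding D_def by (intro continuous_on_sum continuous_on_weighted_norm_sq)
  obtain s where "s \<in> S"
    using triangulation_simplex_nonempty[OF tri S] by blast
  then have "D z \<noteq> 0"
    using large \<epsilon> by (auto simp: rho_eq_weighted_norm_sq D_def)
  then have D_pos: "D z > 0"
    unfolding D_def by (intro order_le_neq_trans sum_nonneg) (auto simp: weighted_norm_sq_nonneg)
  have "weighted_norm_sq w \<delta> z m - B * D z \<le> 0"
  proof (rule closure_preserves_le_under_strict_hyps[OF \<open>finite S\<close>,
        where f = "\<lambda>s z. weighted_norm_sq w \<delta> z s - \<epsilon> * D z"])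
    show "weighted_norm_sq w \<delta> x m - B * D x \<le> 0"
      if x: "x \<in> torus_cone \<Delta>" and pos: "\<forall>s\<in>S. 0 < weighted_norm_sq w \<delta> x s - \<epsilon> * D x" for x
    proof -
      have "weighted_norm_sq w \<delta> x m \<le> B * D x"
        unfolding B_def D_def
        by (rule torus_cone_estimate[OF tri cvx A margin \<delta> \<epsilon> x S m]) (use pos in \<open>auto simp: D_def\<close>)
      then show ?thesis
        by simp
    qed
    show "z \<in> closure (torus_cone \<Delta>)"
      using z by (simp add: PSigma_def)
    show "\<forall>s\<in>S. 0 < weighted_norm_sq w \<delta> z s - \<epsilon> * D z"
      using large D_pos by (simp add: rho_eq_weighted_norm_sq D_def pos_less_divide_eq)
  qed (intro continuous_intros continuous_on_D continuous_on_weighted_norm_sq)+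
  then show ?thesis
    using D_pos by (simp add: rho_eq_weighted_norm_sq B_def D_def pos_divide_le_eq)
qed

theorem mainTheorem5:
  fixes \<Delta> :: "(real \<times> real) set" and w :: "int \<times> int \<Rightarrow> int"
    and Z :: "(int \<times> int) set set" and \<epsilon> :: real
  assumes "is_lattice_polygon \<Delta>"
    and "induces w \<Delta> Z"
    and "\<epsilon> > 0"
  shows "\<exists>C a \<delta>0. C > 0 \<and> a > 0 \<and> \<delta>0 > 0 \<and>
    (\<forall>\<delta>. 0 < \<delta> \<and> \<delta> < 1 \<and> \<delta> < \<delta>0 \<longrightarrow>
      (\<forall>S\<in>Z. \<forall>z\<in>PSigma \<Delta>.
         (\<forall>m\<in>S. rho w \<Delta> \<delta> z m > \<epsilon>) \<longrightarrow>
         (\<forall>m\<in>lattice_pts \<Delta> - S. insert m S \<notin> Z \<longrightarrow> rho w \<Delta> \<delta> z m \<le> C * \<delta> powr a)))"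
proof -
  have cvx: "convex \<Delta>" and A: "finite (lattice_pts \<Delta>)"
    using lattice_polygon_bounded_convex[OF assms(1)] finite_lattice_pts by auto
  note tri = induces_triangulation[OF assms(2)]
  obtain e where e: "e > 0" "\<And>T. T \<in> Z \<Longrightarrow> supported_with_margin w (lattice_pts \<Delta>) T e"
    using induces_supported_with_margin[OF assms(2) A] by blast
  define C where "C = max 1 (1 / \<epsilon>) ^ card (lattice_pts \<Delta>)"
  have "rho w \<Delta> \<delta> z m \<le> C * \<delta> powr (2 * e)"
    if \<delta>: "0 < \<delta>" "\<delta> < 1" and S: "S \<in> Z" and z: "z \<in> PSigma \<Delta>"
      and large: "\<forall>m\<in>S. \<epsilon> < rho w \<Delta> \<delta> z m" and m: "m \<in> lattice_pts \<Delta> - S" "insert m S \<notin> Z"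
    for \<delta> S z m
  proof -
    have "card S \<le> card (lattice_pts \<Delta>)"
      using triangulation_subset_Pow[OF tri] S A by (auto intro: card_mono)
    then have "(1 / \<epsilon>) ^ card S \<le> C"
      unfolding C_def using assms(3)
      by (meson max.cobounded1 max.cobounded2 order_trans power_increasing power_mono
          zero_le_divide_1_iff less_imp_le)
    moreover have "rho w \<Delta> \<delta> z m \<le> (1 / \<epsilon>) ^ card S * \<delta> powr (2 * e)"
      using PSigma_estimate[OF tri cvx A e(2) _ \<delta> assms(3) S m z large] e(1) by simp
    ultimately show ?thesis
      by (smt (verit) mult_right_mono powr_ge_zero)
  qed
  moreover have "C > 0"
    by (simp add: C_def)
  ultimately show ?thesis
    using e(1) by (intro exI[of _ C] exI[of _ "2 * e"] exI[of _ 1]) auto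
qed

end
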